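(* In the transactional panorama model described in the context, if every read transaction is answered so as to maintain consistency-committed ($C_c$), i.e., each read transaction returns the states of its views from the most recently committed version of the view graph, then the resulting sequence of read transactions also maintains monotonicity and visibility.
   Context: A view graph is a directed acyclic graph on a fixed set $N$ of nodes (source data and views); there is an edge $n_j \to n_i$ if view $n_i$ takes $n_j$ as input, and the dependents of a node are the nodes reachable from it. The view graph is multi-versioned. Write transactions $w^{t_1},\dots,w^{t_n}$ (timestamps $t_1<\dots<t_n$, starting from an initial version $G^{t_0}$) each modify some source nodes and must recompute their dependents; they are processed one at a time in timestamp order. Write transaction $w^{t_i}$ creates version $G^{t_i}=(E,N,V^{t_i})$, where for each node $n_k$ the set $V^{t_i}$ contains: the result $v_k^{t_i}$ if $w^{t_i}$ updates $n_k$ and has already computed it; a placeholder $UC_k^{t_i}$ ("under computation") if $w^{t_i}$ updates $n_k$ but has not yet computed it; or the result of $n_k$ from the previous version if $w^{t_i}$ does not update $n_k$. A version is committed once all its new results have been computed (and its commit is recorded); the most recently committed version contains no UCs. The timestamp of a returned state is the timestamp of the version it belongs to. Read transactions $r^{s_1},\dots,r^{s_m}$ ($s_1<\dots<s_m$) each read the set of views in the user's current viewport (a subset of $N$, which may change between reads) and return immediately, without waiting, a set $H^{s_i}$ containing one state (a view result or a UC) per view read. Monotonicity: for any view $n_k$ read by two transactions $r^{s_i}, r^{s_j}$ with $s_i<s_j$, returning states with timestamps $t_p$ and $t_q$, we have $t_p \le t_q$. Visibility: no $H^{s_i}$ contains a UC. Consistency: for each $r^{s_i}$ there is a version $G^{t_j}=(E,N,V^{t_j})$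 with $t_j\le s_i$ and $H^{s_i}\subseteq V^{t_j}$. *)

theory Defs
  imports Main
begin

text \<open>State of a node in a version: a view result, or the placeholder UC
  ("under computation").\<close>
datatype 'v state = Res 'v | UC

definition updated :: "('n \<times> 'n) set \<Rightarrow> 'n set \<Rightarrow> 'n set" where
  "updated E S = {k. \<exists>j\<in>S. (j, k) \<in> E\<^sup>*}"

text \<open>State of node k in version G^{t_i} at (real) time tau.
  val i k is the result v_k^{t_i} computed by w^{t_i} (val 0 = initial version),
  ctime i k is the time at which w^{t_i} finishes computing node k,
  upd i is the set of nodes updated by w^{t_i}.\<close>
fun ver_state ::
  "(nat \<Rightarrow> 'n set) \<Rightarrow> (nat \<Rightarrow> 'n \<Rightarrow> 'v) \<Rightarrow> (nat \<Rightarrow> 'n \<Rightarrow> 'ts::linorder)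
     \<Rightarrow> nat \<Rightarrow> 'ts \<Rightarrow> 'n \<Rightarrow> 'v state" where
  "ver_state upd val ctime 0 tau k = Res (val 0 k)"
| "ver_state upd val ctime (Suc i) tau k =
     (if k \<in> upd (Suc i)
      then (if ctime (Suc i) k \<le> tau then Res (val (Suc i) k) else UC)
      else ver_state upd val ctime i tau k)"

text \<open>Index of the most recently committed version at time s
  (commit i = commit time of version i, versions 0..n).\<close>
definition most_recent_committed :: "nat \<Rightarrow> (nat \<Rightarrow> 'ts::linorder) \<Rightarrow> 'ts \<Rightarrow> nat" where
  "most_recent_committed n commit s = (GREATEST j. j \<le> n \<and> commit j \<le> s)"

text \<open>Read results H i (i = 1..m): sets of triples (node, timestamp of the state, state).\<close>

definition maintains_Cc ::
  "nat \<Rightarrow> (nat \<Rightarrow> 'ts::linorder) \<Rightarrow> (nat \<Rightarrow> 'ts) \<Rightarrow> (nat \<Rightarrow> 'n set) \<Rightarrow> (nat \<Rightarrow> 'n \<Rightarrow> 'v)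
    \<Rightarrow> (nat \<Rightarrow> 'n \<Rightarrow> 'ts) \<Rightarrow> nat \<Rightarrow> (nat \<Rightarrow> 'ts) \<Rightarrow> (nat \<Rightarrow> 'n set)
    \<Rightarrow> (nat \<Rightarrow> ('n \<times> 'ts \<times> 'v state) set) \<Rightarrow> bool" where
  "maintains_Cc n t commit upd val ctime m s vp H \<longleftrightarrow>
     (\<forall>i\<in>{1..m}. H i =
        {(k, t (most_recent_committed n commit (s i)),
             ver_state upd val ctime (most_recent_committed n commit (s i)) (s i) k) | k. k \<in> vp i})"

definition monotonicity :: "nat \<Rightarrow> (nat \<Rightarrow> ('n \<times> 'ts::linorder \<times> 'v state) set) \<Rightarrow> bool" where
  "monotonicity m H \<longleftrightarrow>
     (\<forall>i\<in>{1..m}. \<forall>j\<in>{1..m}. i < j \<longrightarrow>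
        (\<forall>k tp sp tq sq. (k, tp, sp) \<in> H i \<and> (k, tq, sq) \<in> H j \<longrightarrow> tp \<le> tq))"

definition visibility :: "nat \<Rightarrow> (nat \<Rightarrow> ('n \<times> 'ts \<times> 'v state) set) \<Rightarrow> bool" where
  "visibility m H \<longleftrightarrow> (\<forall>i\<in>{1..m}. \<forall>k tp sp. (k, tp, sp) \<in> H i \<longrightarrow> sp \<noteq> UC)"

end

theory Submission
  imports Defs
begin

text \<open>Under \<open>C\<^sub>c\<close> the version read at time \<open>s\<close> is the latest one committed by \<open>s\<close>.
  Its index grows with \<open>s\<close>, and timestamps grow with the index, which gives monotonicity.
  Every version up to it committed no later than \<open>s\<close>, so all their computations finished
  by \<open>s\<close>, and no UC can remain in it, which gives visibility.\<close>

lemma Suc_less_upto_imp_le: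
  fixes f :: "nat \<Rightarrow> 'a::order"
  assumes "\<forall>i<n. f i < f (Suc i)" "a \<le> b" "b \<le> n"
  shows "f a \<le> f b"
  by (rule lift_Suc_mono_le_ivl[of "{..<n}"]) (use assms in auto)

lemma
  assumes "commit 0 \<le> s"
  shows most_recent_committed_le: "most_recent_committed n commit s \<le> n"
    and commit_most_recent_committed_le: "commit (most_recent_committed n commit s) \<le> s"
proof -
  have "most_recent_committed n commit s \<le> n \<and> commit (most_recent_committed n commit s) \<le> s"
    unfolding most_recent_committed_def
    by (rule GreatestI_nat[where k=0 and b=n]) (use assms in auto)
  then show "most_recent_committed n commit s \<le> n"
    and "commit (most_recent_committed n commit s) \<le> s" by auto
qed

lemma most_recent_committed_mono:
  assumes "commit 0 \<le> s" "s \<le> s'"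
  shows "most_recent_committed n commit s \<le> most_recent_committed n commit s'"
proof -
  let ?j = "most_recent_committed n commit s"
  have "?j \<le> n" "commit ?j \<le> s'"
    using most_recent_committed_le[of commit, OF assms(1)]
      order_trans[OF commit_most_recent_committed_le[of commit, OF assms(1)] assms(2)]
    by auto
  then show ?thesis
    unfolding most_recent_committed_def[of n commit s']
    by (intro Greatest_le_nat[where b=n]) auto
qed

lemma ver_state_not_UC:
  assumes "\<forall>i'\<in>{1..i}. \<forall>k\<in>upd i'. ctime i' k \<le> tau"
  shows "ver_state upd val ctime i tau k \<noteq> UC"
  using assms by (induction i) auto

lemma committed_ver_state_not_UC:
  assumes commit_seq: "\<forall>i<n. commit i < commit (Suc i)"
    and commit_computed: "\<forall>i\<in>{1..n}. \<forall>k\<in>upd i. ctime i k \<le> commit i"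
    and "j \<le> n" "commit j \<le> tau"
  shows "ver_state upd val ctime j tau k \<noteq> UC"
proof (rule ver_state_not_UC, intro ballI)
  fix i k
  assume i: "i \<in> {1..j}" and k: "k \<in> upd i"
  have "ctime i k \<le> commit i" using commit_computed i k \<open>j \<le> n\<close> by auto
  also have "commit i \<le> commit j"
    using i \<open>j \<le> n\<close> by (intro Suc_less_upto_imp_le[OF commit_seq]) auto
  also have "\<dots> \<le> tau" by fact
  finally show "ctime i k \<le> tau" .
qed

lemma maintains_Cc_memD:
  assumes "maintains_Cc n t commit upd val ctime m s vp H" "i \<in> {1..m}" "(k, tp, sp) \<in> H i"
  shows "tp = t (most_recent_committed n commit (s i))"
    and "sp = ver_state upd val ctime (most_recent_committed n commit (s i)) (s i) k"
  using assms unfolding maintains_Cc_def by auto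

lemma maintains_Cc_monotonicity:
  assumes ts_mono: "\<forall>i<n. t i < t (Suc i)"
    and reads_mono: "\<forall>i\<in>{1..m}. \<forall>j\<in>{1..m}. i < j \<longrightarrow> s i < s j"
    and reads_after_init: "\<forall>i\<in>{1..m}. commit 0 \<le> s i"
    and Cc: "maintains_Cc n t commit upd val ctime m s vp H"
  shows "monotonicity m H"
  unfolding monotonicity_def
proof (intro ballI impI allI)
  fix i j k tp sp tq sq
  assume i: "i \<in> {1..m}" and j: "j \<in> {1..m}" and "i < j"
    and reads: "(k, tp, sp) \<in> H i \<and> (k, tq, sq) \<in> H j"
  let ?J = "most_recent_committed n commit"
  have init: "commit 0 \<le> s i" "commit 0 \<le> s j" using reads_after_init i j by auto
  have "?J (s i) \<le> ?J (s j)"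
    using reads_mono i j \<open>i < j\<close>
    by (intro most_recent_committed_mono[of commit, OF init(1)]) (auto intro: less_imp_le)
  moreover have "?J (s j) \<le> n" by (rule most_recent_committed_le[of commit, OF init(2)])
  ultimately have "t (?J (s i)) \<le> t (?J (s j))" by (rule Suc_less_upto_imp_le[OF ts_mono])
  then show "tp \<le> tq"
    using maintains_Cc_memD(1)[OF Cc i] maintains_Cc_memD(1)[OF Cc j] reads by auto
qed

lemma maintains_Cc_visibility:
  assumes commit_seq: "\<forall>i<n. commit i < commit (Suc i)"
    and commit_computed: "\<forall>i\<in>{1..n}. \<forall>k\<in>upd i. ctime i k \<le> commit i"
    and reads_after_init: "\<forall>i\<in>{1..m}. commit 0 \<le> s i"
    and Cc: "maintains_Cc n t commit upd val ctime m s vp H"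
  shows "visibility m H"
  unfolding visibility_def
proof (intro ballI allI impI)
  fix i k tp sp
  assume i: "i \<in> {1..m}" and "(k, tp, sp) \<in> H i"
  then have sp: "sp = ver_state upd val ctime (most_recent_committed n commit (s i)) (s i) k"
    by (rule maintains_Cc_memD(2)[OF Cc])
  have init: "commit 0 \<le> s i" using reads_after_init i by auto
  show "sp \<noteq> UC"
    unfolding sp
    by (rule committed_ver_state_not_UC[OF commit_seq commit_computed
          most_recent_committed_le[of commit, OF init]
          commit_most_recent_committed_le[of commit, OF init]])
qed

theorem theorem2p4:
  fixes N :: "'n set" and E :: "('n \<times> 'n) set"
    and n :: nat and t :: "nat \<Rightarrow> 'ts::linorder"
    and src upd :: "nat \<Rightarrow> 'n set" and val :: "nat \<Rightarrow> 'n \<Rightarrow> 'v"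
    and ctime :: "nat \<Rightarrow> 'n \<Rightarrow> 'ts" and commit :: "nat \<Rightarrow> 'ts"
    and m :: nat and s :: "nat \<Rightarrow> 'ts" and vp :: "nat \<Rightarrow> 'n set"
    and H :: "nat \<Rightarrow> ('n \<times> 'ts \<times> 'v state) set"
  assumes graph: "E \<subseteq> N \<times> N" "acyclic E"
    and ts_mono: "\<forall>i<n. t i < t (Suc i)"
    and src: "\<forall>i\<in>{1..n}. src i \<subseteq> N"
    and upd: "\<forall>i\<in>{1..n}. upd i = updated E (src i)"
    and commit_init: "commit 0 = t 0"
    and commit_seq: "\<forall>i<n. commit i < commit (Suc i)"
    and commit_computed: "\<forall>i\<in>{1..n}. \<forall>k\<in>upd i. ctime i k \<le> commit i"
    and reads_mono: "\<forall>i\<in>{1..m}. \<forall>j\<in>{1..m}. i < j \<longrightarrow> s i < s j"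
    and reads_after_init: "\<forall>i\<in>{1..m}. t 0 \<le> s i"
    and viewport: "\<forall>i\<in>{1..m}. vp i \<subseteq> N"
    and Cc: "maintains_Cc n t commit upd val ctime m s vp H"
  shows "monotonicity m H \<and> visibility m H"
proof -
  have after_init: "\<forall>i\<in>{1..m}. commit 0 \<le> s i"
    using reads_after_init commit_init by simp
  show ?thesis
    using maintains_Cc_monotonicity[OF ts_mono reads_mono after_init Cc]
      maintains_Cc_visibility[OF commit_seq commit_computed after_init Cc] by simp
qed

end
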